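(* Let $h_1,h_2\in\mathbb{C}\setminus\{0\}$ with $|h_1|\le|h_2|$, deadlines $D_1<D_2$, minimum blocklength $\hat m>0$, power budget $P_{\max}>0$, packet sizes $N_1,N_2>0$ and error probabilities $\epsilon_1,\epsilon_2\in(0,1)$. For $k=1,2$ define, for $m>0,\gamma>0$, $$F_k(m,\gamma)=\sqrt{\frac{1}{m}\left(1-\frac{1}{(\gamma+1)^2}\right)}\,\frac{Q^{-1}(\epsilon_k)}{\ln 2}-\log_2(1+\gamma)+\frac{N_k}{m},$$ and let $\Gamma_k(m)$ denote the implicit function defined by $F_k(m,\Gamma_k(m))=0$, $\Gamma_k(m)>0$. Consider the problem $$\min_{\{m_k,p_k,\gamma_k\}_{k=1,2}} m_1p_1+m_2p_2$$ subject to $F_k(m_k,\gamma_k)=0$, $\hat m\le m_k\le D_k$, $p_k\ge0$ for $k=1,2$, $p_1+p_2\le P_{\max}$, $\gamma_1=\frac{p_1|h_1|^2}{p_2|h_1|^2+1}$, $\gamma_2=p_2|h_2|^2$. Suppose that $\frac{Q^{-1}(\epsilon_k)}{\sqrt{N_k}}\le \frac{2\sqrt{\ln 2}}{4-\sqrt2}=0.64394\ldots$ for $k=1,2$ and that the problem is feasible. Then an optimal solution is $$m_k^*=D_k,\quad \gamma_k^*=\Gamma_k(D_k)\ (k=1,2),\quad p_1^*=\frac{\gamma_1^*\gamma_2^*}{|h_2|^2}+\frac{\gamma_1^*}{|h_1|^2},\quad p_2^*=\frac{\gamma_2^*}{|h_2|^2}.$$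
   Context: $Q^{-1}$ is the inverse of the Gaussian Q-function. The setting is a two-user single-antenna downlink with superposition coding and unit noise variances; receiver 1 treats receiver 2's signal as noise and receiver 2 performs successive interference cancellation. Blocklengths $m_k$ are treated as continuous variables. The constraint $F_k(m_k,\gamma_k)=0$ is the finite-blocklength rate relation $\frac{N_k}{m_k}=\log_2(1+\gamma_k)-\sqrt{\frac{1}{m_k}\big(1-\frac{1}{(1+\gamma_k)^2}\big)}\frac{Q^{-1}(\epsilon_k)}{\ln2}$. *)

theory Defs
  imports "HOL-Probability.Probability"
begin

definition Qfun :: "real \<Rightarrow> real" where
  "Qfun x = (LINT t:{x<..}|lborel. std_normal_density t)"

definition Qinv :: "real \<Rightarrow> real" where
  "Qinv e = (THE x. Qfun x = e)"

definition Fk :: "real \<Rightarrow> real \<Rightarrow> real \<Rightarrow> real \<Rightarrow> real" where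
  "Fk N eps m \<gamma> =
     sqrt ((1 / m) * (1 - 1 / (\<gamma> + 1)^2)) * Qinv eps / ln 2 - log 2 (1 + \<gamma>) + N / m"

definition Gammak :: "real \<Rightarrow> real \<Rightarrow> real \<Rightarrow> real" where
  "Gammak N eps m = (THE \<gamma>. \<gamma> > 0 \<and> Fk N eps m \<gamma> = 0)"

definition feasible ::
  "complex \<Rightarrow> complex \<Rightarrow> real \<Rightarrow> real \<Rightarrow> real \<Rightarrow> real \<Rightarrow> real \<Rightarrow> real \<Rightarrow> real \<Rightarrow> real \<Rightarrow>
   real \<Rightarrow> real \<Rightarrow> real \<Rightarrow> real \<Rightarrow> real \<Rightarrow> real \<Rightarrow> bool" where
  "feasible h1 h2 D1 D2 mhat Pmax N1 N2 eps1 eps2 m1 p1 g1 m2 p2 g2 \<longleftrightarrow>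
     Fk N1 eps1 m1 g1 = 0 \<and> Fk N2 eps2 m2 g2 = 0 \<and>
     mhat \<le> m1 \<and> m1 \<le> D1 \<and> mhat \<le> m2 \<and> m2 \<le> D2 \<and>
     p1 \<ge> 0 \<and> p2 \<ge> 0 \<and> p1 + p2 \<le> Pmax \<and>
     g1 = p1 * (cmod h1)^2 / (p2 * (cmod h1)^2 + 1) \<and>
     g2 = p2 * (cmod h2)^2"

end

(*
  Write n = N ln 2 and q = Q^-1(eps).  Solving F(m, gamma) = 0 for sqrt m gives
  sqrt m * level n q gamma = 2 n, where level n q gamma = sqrt (q^2 V + 4 n ln (1 + gamma)) - q sqrt V
  and V = 1 - 1 / (1 + gamma)^2.  Since level is strictly increasing from level 0 = 0, the root
  Gamma(m) is unique and decreases in m, so the deadline D_k gives the smallest feasible SINR.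
  Along the root curve the energy is m gamma = 4 n^2 / (level n q gamma / sqrt gamma)^2, and the bound
  on Q^-1(eps) / sqrt N (which gives 3 q^2 <= 2 n) makes level n q gamma / sqrt gamma nonincreasing;
  hence m Gamma(m) also decreases and is smallest at m = D_k.  Finally, successive interference
  cancellation forces p2 = gamma2 / |h2|^2 and p1 = gamma1 (gamma2 / |h2|^2 + 1 / |h1|^2), which are
  monotone in the SINRs, so the deadline point uses no more power and no more energy than any
  feasible point.
*)

theory Submission
  imports Defs
begin

definition dispersion :: "real \<Rightarrow> real" where
  "dispersion x = 1 - 1 / (1 + x)^2"

definition dispersion_quot :: "real \<Rightarrow> real" where
  "dispersion_quot x = (2 + x) / (1 + x)^2"

lemma dispersion_eq_mult_quot: "x > -1 \<Longrightarrow> dispersion x = x * dispersion_quot x"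
  unfolding dispersion_def dispersion_quot_def by (simp add: field_simps; algebra)

lemma dispersion_pos: "x > 0 \<Longrightarrow> dispersion x > 0"
  using one_less_power[of "1 + x" 2] by (simp add: dispersion_def divide_less_eq)

lemma dispersion_quot_pos: "x > -1 \<Longrightarrow> dispersion_quot x > 0"
  unfolding dispersion_quot_def by simp

lemma has_real_derivative_dispersion:
  "x > -1 \<Longrightarrow> (dispersion has_real_derivative 2 / (1 + x)^3) (at x)"
  unfolding dispersion_def
  by (rule derivative_eq_intros refl | simp)+ (simp add: field_simps; algebra)

lemma has_real_derivative_dispersion_quot:
  "x > -1 \<Longrightarrow> (dispersion_quot has_real_derivative - ((x + 3) / (1 + x)^3)) (at x)"
  unfolding dispersion_quot_def
  by (rule derivative_eq_intros refl | simp)+ (simp add: field_simps; algebra)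

lemma ln_one_plus_ge:
  fixes x :: real
  assumes "0 \<le> x"
  shows "2 * x / (2 + x) \<le> ln (1 + x)"
proof -
  let ?f = "\<lambda>x::real. ln (1 + x) - 2 * x / (2 + x)"
  have "?f 0 \<le> ?f x"
  proof (rule DERIV_nonneg_imp_nondecreasing[OF assms])
    fix y :: real assume y: "0 \<le> y"
    have "(?f has_real_derivative 1 / (1 + y) - 4 / (2 + y)^2) (at y)"
      using y by (auto intro!: derivative_eq_intros simp: field_simps power2_eq_square)
    moreover have "4 / (2 + y)^2 \<le> 1 / (1 + y)"
    proof -
      have "4 * (1 + y) \<le> (2 + y)^2"
        by (simp add: power2_eq_square algebra_simps)
      then show ?thesis
        using y by (simp add: divide_simps)
    qed
    ultimately show "\<exists>d. (?f has_real_derivative d) (at y) \<and> d \<ge> 0"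
      by force
  qed
  then show ?thesis by simp
qed

lemma has_real_derivative_sqrt_gap:
  fixes f g :: "real \<Rightarrow> real"
  assumes f: "(f has_real_derivative f') (at x)" and g: "(g has_real_derivative g') (at x)"
    and pos: "f x > 0" "q^2 * f x + c * g x > 0"
  shows "((\<lambda>x. sqrt (q^2 * f x + c * g x) - q * sqrt (f x)) has_real_derivative
           (q^2 * f' + c * g') / (2 * sqrt (q^2 * f x + c * g x)) - q * f' / (2 * sqrt (f x))) (at x)"
  using pos
  by (auto intro!: derivative_eq_intros f g simp: field_simps)

lemma has_real_derivative_ln_one_plus_quot:
  fixes x :: real
  assumes "x > 0"
  shows "((\<lambda>x. ln (1 + x) / x) has_real_derivative - (ln (1 + x) / x^2 - 1 / (x * (1 + x)))) (at x)"
proof -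
  have "- (ln (1 + x) / x^2 - 1 / (x * (1 + x))) = (x / (1 + x) - ln (1 + x)) / x^2"
    using assms by (simp add: divide_simps power2_eq_square; simp add: algebra_simps)
  with assms show ?thesis
    by (auto intro!: derivative_eq_intros simp: power2_eq_square)
qed

definition level :: "real \<Rightarrow> real \<Rightarrow> real \<Rightarrow> real" where
  "level n q x = sqrt (q^2 * dispersion x + 4 * n * ln (1 + x)) - q * sqrt (dispersion x)"

lemma level_zero [simp]: "level n q 0 = 0"
  unfolding level_def dispersion_def by simp

lemma level_pos:
  assumes n: "n > 0" and x: "x > 0"
  shows "level n q x > 0"
proof -
  have "q * sqrt (dispersion x) \<le> \<bar>q\<bar> * sqrt (dispersion x)"
    using dispersion_pos[OF x] by (simp add: mult_right_mono)
  also have "\<dots> = sqrt (q^2 * dispersion x)"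
    by (simp add: real_sqrt_mult)
  also have "\<dots> < sqrt (q^2 * dispersion x + 4 * n * ln (1 + x))"
    using n x by simp
  finally show ?thesis
    unfolding level_def by simp
qed

lemma continuous_on_level: "continuous_on {0..b} (level n q)"
  unfolding level_def dispersion_def by (intro continuous_intros) auto

lemma level_deriv_pos:
  assumes n: "n > 0" and x: "x > 0"
  shows "\<exists>d. (level n q has_real_derivative d) (at x) \<and> d > 0"
proof -
  define V V' L W where "V = dispersion x" and "V' = 2 / (1 + x)^3" and "L = ln (1 + x)"
    and "W = q^2 * V + 4 * n * L"
  have pos: "V > 0" "V' > 0" "L > 0" "W > 0"
    using x n dispersion_pos[OF x] by (auto simp: V_def V'_def L_def W_def add_nonneg_pos)
  have "((\<lambda>x. ln (1 + x)) has_real_derivative 1 / (1 + x)) (at x)"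
    using x by (auto intro!: derivative_eq_intros)
  from has_real_derivative_sqrt_gap[OF has_real_derivative_dispersion this, of q "4 * n"]
  have deriv: "(level n q has_real_derivative
      (q^2 * V' + 4 * n * (1 / (1 + x))) / (2 * sqrt W) - q * V' / (2 * sqrt V)) (at x)"
    using x pos by (simp add: level_def[abs_def] V_def V'_def L_def W_def)
  have "q * V' * sqrt W < (q^2 * V' + 4 * n * (1 / (1 + x))) * sqrt V"
  proof (cases "q \<le> 0")
    case True
    have "q * V' * sqrt W \<le> 0"
      using True pos by (simp add: mult_nonpos_nonneg)
    moreover have "(q^2 * V' + 4 * n * (1 / (1 + x))) * sqrt V > 0"
      using pos n x by (simp add: add_nonneg_pos)
    ultimately show ?thesis by linarith
  next
    case False
    have "x \<le> (1 + x)^2 - 1"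
      using x by (simp add: power2_eq_square algebra_simps)
    then have "L \<le> (1 + x)^2 - 1"
      using ln_add_one_self_le_self[of x] x by (simp add: L_def)
    then have "V' * L \<le> 2 * ((1 + x)^2 - 1) / (1 + x)^3"
      using x by (simp add: V'_def divide_right_mono)
    also have "\<dots> = 2 * (1 / (1 + x)) * V"
      using x by (simp add: V_def dispersion_def field_simps; algebra)
    finally have "V' * L \<le> 2 * (1 / (1 + x)) * V" .
    then have "0 \<le> 4 * n * q^2 * V' * (2 * (1 / (1 + x)) * V - V' * L)"
      using pos n by simp
    moreover have "((q^2 * V' + 4 * n * (1 / (1 + x))) * sqrt V)^2 - (q * V' * sqrt W)^2
        = 4 * n * q^2 * V' * (2 * (1 / (1 + x)) * V - V' * L) + 16 * n^2 * (1 / (1 + x))^2 * V"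
      using pos by (simp add: power_mult_distrib W_def power2_eq_square algebra_simps)
    moreover have "16 * n^2 * (1 / (1 + x))^2 * V > 0"
      using pos n x by simp
    ultimately have "(q * V' * sqrt W)^2 < ((q^2 * V' + 4 * n * (1 / (1 + x))) * sqrt V)^2"
      by linarith
    then show ?thesis
      by (rule power2_less_imp_less) (use pos n x in simp)
  qed
  then have "0 < ((q^2 * V' + 4 * n * (1 / (1 + x))) * sqrt V - q * V' * sqrt W) / (2 * sqrt W * sqrt V)"
    using pos by simp
  also have "\<dots> = (q^2 * V' + 4 * n * (1 / (1 + x))) / (2 * sqrt W) - q * V' / (2 * sqrt V)"
    using pos by (simp add: field_simps)
  finally have "(q^2 * V' + 4 * n * (1 / (1 + x))) / (2 * sqrt W) - q * V' / (2 * sqrt V) > 0" .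
  with deriv show ?thesis by blast
qed

lemma level_strict_mono:
  assumes "n > 0" "0 < x" "x < y"
  shows "level n q x < level n q y"
  by (rule DERIV_pos_imp_increasing[OF \<open>x < y\<close>]) (use level_deriv_pos assms in auto)

lemma ln_one_plus_quot_eq:
  "(x::real) > 0 \<Longrightarrow> ln (1 + x) / x = 2 / (2 + x) + (ln (1 + x) - 2 * x / (2 + x)) / x"
  by (simp add: divide_simps; simp add: algebra_simps)

lemma ln_one_plus_quot_slope_eq:
  "(x::real) > 0 \<Longrightarrow> ln (1 + x) / x^2 - 1 / (x * (1 + x))
     = 1 / ((2 + x) * (1 + x)) + (ln (1 + x) - 2 * x / (2 + x)) / x^2"
  by (simp add: divide_simps power2_eq_square; simp add: algebra_simps)

lemma ln_one_plus_quot_slope_pos: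
  fixes x :: real
  assumes "x > 0"
  shows "ln (1 + x) / x^2 - 1 / (x * (1 + x)) > 0"
  using ln_one_plus_quot_slope_eq[OF assms] ln_one_plus_ge[of x] assms
  by (smt (verit) divide_nonneg_pos divide_pos_pos mult_pos_pos zero_less_power)

lemma sqrt_dispersion_quot_ge:
  fixes x n q B :: real
  assumes x: "x > 0" and n: "n > 0" and q: "q > 0" and qn: "3 * q^2 \<le> 2 * n"
    and B: "B \<ge> 2 / (2 + x)"
  shows "q * (x + 4) / (1 + x)^2 \<le> sqrt (dispersion_quot x * (q^2 * dispersion_quot x + 4 * n * B))"
proof -
  define r where "r = 1 + x"
  have r: "r > 1" using x r_def by simp
  have "q^2 * (4 * x + 12) \<le> (2 * n / 3) * (4 * x + 12)"
    using qn x by (intro mult_right_mono) auto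
  also have "\<dots> \<le> 8 * n * r^2"
    using x n by (simp add: r_def power2_eq_square algebra_simps)
  finally have "q^2 * (x + 4)^2 \<le> q^2 * (r + 1)^2 + 8 * n * r^2"
    by (simp add: r_def power2_eq_square algebra_simps)
  then have "(q * (x + 4) / (1 + x)^2)^2 \<le> (q^2 * (r + 1)^2 + 8 * n * r^2) / r^4"
    by (simp add: r_def power_divide power_mult_distrib divide_right_mono flip: power_mult)
  also have "\<dots> = (r + 1) / r^2 * (q^2 * ((r + 1) / r^2) + 4 * n * (2 / (r + 1)))"
  proof -
    have "(r + 1) / r^2 * (q^2 * ((r + 1) / r^2)) = q^2 * (r + 1)^2 / r^4"
      by (simp add: power2_eq_square power4_eq_xxxx mult_ac)
    moreover have "(r + 1) / r^2 * (4 * n * (2 / (r + 1))) = 8 * n * r^2 / r^4"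
      using r by (simp add: power2_eq_square power4_eq_xxxx)
    ultimately show ?thesis
      by (simp add: distrib_left add_divide_distrib)
  qed
  also have "\<dots> = dispersion_quot x * (q^2 * dispersion_quot x + 4 * n * (2 / (2 + x)))"
    by (simp add: dispersion_quot_def r_def add.commute)
  also have "\<dots> \<le> dispersion_quot x * (q^2 * dispersion_quot x + 4 * n * B)"
    using B n dispersion_quot_pos[of x] x by (intro mult_left_mono add_left_mono) auto
  finally show ?thesis
    using q x by (simp add: real_le_rsqrt)
qed

lemma dispersion_slope_ineq:
  fixes x n q :: real
  assumes x: "x > 0" and n: "n > 0" and q: "q > 0" and qn: "3 * q^2 \<le> 2 * n"
  defines "A \<equiv> dispersion_quot x" and "a \<equiv> (x + 3) / (1 + x)^3"
    and "B \<equiv> ln (1 + x) / x" and "b \<equiv> ln (1 + x) / x^2 - 1 / (x * (1 + x))"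
  shows "q * a * B \<le> b * (sqrt (A * (q^2 * A + 4 * n * B)) + q * A)"
proof -
  \<comment> \<open>split off d = ln (1 + x) - 2 x / (2 + x) \<ge> 0: the main parts are compared by
    sqrt_dispersion_quot_ge, the d-parts by a x \<le> A\<close>
  define S where "S = sqrt (A * (q^2 * A + 4 * n * B))"
  define d where "d = ln (1 + x) - 2 * x / (2 + x)"
  have d: "d \<ge> 0" using ln_one_plus_ge[of x] x by (simp add: d_def)
  have A: "A > 0" using dispersion_quot_pos[of x] x by (simp add: A_def)
  have B: "B = 2 / (2 + x) + d / x" and b: "b = 1 / ((2 + x) * (1 + x)) + d / x^2"
    using ln_one_plus_quot_eq[OF x] ln_one_plus_quot_slope_eq[OF x] by (simp_all add: B_def b_def d_def)
  have S: "S \<ge> 0" using A n x by (simp add: S_def B_def)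
  have "2 * q * a * (1 + x) = q * (x + 4) / (1 + x)^2 + q * A"
    using x by (simp add: a_def A_def dispersion_quot_def divide_simps power2_eq_square power3_eq_cube;
        simp add: algebra_simps)
  also have "q * (x + 4) / (1 + x)^2 \<le> S"
    unfolding S_def A_def using sqrt_dispersion_quot_ge[OF x n q qn, of B] B d x by simp
  finally have "2 * q * a * (1 + x) / ((2 + x) * (1 + x)) \<le> (S + q * A) / ((2 + x) * (1 + x))"
    using x by (intro divide_right_mono) auto
  moreover have "2 * q * a * (1 + x) / ((2 + x) * (1 + x)) = q * a * (2 / (2 + x))"
    using nonzero_mult_divide_mult_cancel_right[of "1 + x" "2 * q * a" "2 + x"] x by simp
  ultimately have "q * a * (2 / (2 + x)) \<le> (S + q * A) * (1 / ((2 + x) * (1 + x)))"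
    by simp
  moreover have "q * a * (d / x) \<le> (S + q * A) * (d / x^2)"
  proof -
    have "a * x \<le> A"
      using x by (simp add: a_def A_def dispersion_quot_def divide_simps power2_eq_square power3_eq_cube;
          simp add: algebra_simps)
    then have "q * (a * x) \<le> S + q * A"
      using q S by (smt (verit) mult_left_mono)
    then have "q * (a * x) * (d / x^2) \<le> (S + q * A) * (d / x^2)"
      using d by (intro mult_right_mono) auto
    then show ?thesis
      using x by (simp add: power2_eq_square)
  qed
  moreover have "q * a * B = q * a * (2 / (2 + x)) + q * a * (d / x)"
    by (simp add: B algebra_simps)
  moreover have "b * (S + q * A) = (S + q * A) * (1 / ((2 + x) * (1 + x))) + (S + q * A) * (d / x^2)"
    by (simp add: b algebra_simps)
  ultimately show ?thesis
    unfolding S_def by linarith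
qed

definition level_quot :: "real \<Rightarrow> real \<Rightarrow> real \<Rightarrow> real" where
  "level_quot n q x =
     sqrt (q^2 * dispersion_quot x + 4 * n * (ln (1 + x) / x)) - q * sqrt (dispersion_quot x)"

lemma level_eq_level_quot_mult:
  assumes "x > 0"
  shows "level n q x = level_quot n q x * sqrt x"
proof -
  have "q^2 * dispersion x + 4 * n * ln (1 + x)
      = x * (q^2 * dispersion_quot x + 4 * n * (ln (1 + x) / x))"
    using assms by (simp add: dispersion_eq_mult_quot algebra_simps)
  then have "sqrt (q^2 * dispersion x + 4 * n * ln (1 + x))
      = sqrt x * sqrt (q^2 * dispersion_quot x + 4 * n * (ln (1 + x) / x))"
    by (simp add: real_sqrt_mult)
  moreover have "sqrt (dispersion x) = sqrt x * sqrt (dispersion_quot x)"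
    using assms by (simp add: dispersion_eq_mult_quot real_sqrt_mult)
  ultimately show ?thesis
    unfolding level_def level_quot_def by (simp add: algebra_simps)
qed

lemma level_quot_deriv_nonpos:
  assumes n: "n > 0" and x: "x > 0" and qn: "q \<le> 0 \<or> 3 * q^2 \<le> 2 * n"
  shows "\<exists>d. (level_quot n q has_real_derivative d) (at x) \<and> d \<le> 0"
proof -
  define A a B b where "A = dispersion_quot x" and "a = (x + 3) / (1 + x)^3"
    and "B = ln (1 + x) / x" and "b = ln (1 + x) / x^2 - 1 / (x * (1 + x))"
  define Z where "Z = q^2 * A + 4 * n * B"
  have pos: "A > 0" "a > 0" "B > 0" "b > 0" "Z > 0"
    using x n dispersion_quot_pos[of x] ln_one_plus_quot_slope_pos[OF x]
    by (auto simp: A_def a_def B_def b_def Z_def add_nonneg_pos)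
  from has_real_derivative_sqrt_gap[OF has_real_derivative_dispersion_quot
      has_real_derivative_ln_one_plus_quot[OF x], of q "4 * n"]
  have deriv: "(level_quot n q has_real_derivative
      (q^2 * (- a) + 4 * n * (- b)) / (2 * sqrt Z) - q * (- a) / (2 * sqrt A)) (at x)"
    using x pos by (simp add: level_quot_def[abs_def] A_def a_def B_def b_def Z_def)
  have "q * a * sqrt Z \<le> (q^2 * a + 4 * n * b) * sqrt A"
  proof (cases "q \<le> 0")
    case True
    have "q * a * sqrt Z \<le> 0"
      using True pos by (simp add: mult_nonpos_nonneg)
    moreover have "(q^2 * a + 4 * n * b) * sqrt A \<ge> 0"
      using pos n by simp
    ultimately show ?thesis by linarith
  next
    case False
    then have q: "q > 0" and "3 * q^2 \<le> 2 * n" using qn by auto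
    define S where "S = sqrt (A * Z)"
    have S: "S = sqrt A * sqrt Z" "S > 0"
      using pos by (simp_all add: S_def real_sqrt_mult)
    \<comment> \<open>S - q A = 4 n A B / (S + q A), and the slope inequality bounds q a B by b (S + q A)\<close>
    have "S^2 = A * Z"
      using pos by (simp add: S_def)
    then have "S^2 = q^2 * A^2 + 4 * n * A * B"
      by (simp add: Z_def power2_eq_square algebra_simps)
    then have "q * a * (S - q * A) * (S + q * A) = 4 * n * A * (q * a * B)"
      by algebra
    also have "\<dots> \<le> 4 * n * A * (b * (S + q * A))"
    proof (rule mult_left_mono)
      show "q * a * B \<le> b * (S + q * A)"
        using dispersion_slope_ineq[OF x n q \<open>3 * q^2 \<le> 2 * n\<close>]
        unfolding S_def Z_def A_def a_def B_def b_def .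
    qed (use pos n in simp)
    finally have "q * a * (S - q * A) * (S + q * A) \<le> (4 * n * A * b) * (S + q * A)"
      by (simp add: mult_ac)
    moreover have "S + q * A > 0"
      using S q pos by (simp add: add_pos_pos)
    ultimately have "q * a * (S - q * A) \<le> 4 * n * A * b"
      by simp
    then have "q * a * S \<le> (q^2 * a + 4 * n * b) * A"
      by (simp add: power2_eq_square algebra_simps)
    then have "(q * a * sqrt Z) * sqrt A \<le> ((q^2 * a + 4 * n * b) * sqrt A) * sqrt A"
      using pos by (simp add: S(1) mult.assoc mult.commute[of "sqrt A"])
    then show ?thesis
      using pos by simp
  qed
  then have "(q * a * sqrt Z - (q^2 * a + 4 * n * b) * sqrt A) / (2 * sqrt Z * sqrt A) \<le> 0"
    using pos by (intro divide_nonpos_pos) auto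
  moreover have "(q^2 * (- a) + 4 * n * (- b)) / (2 * sqrt Z) - q * (- a) / (2 * sqrt A)
      = (q * a * sqrt Z - (q^2 * a + 4 * n * b) * sqrt A) / (2 * sqrt Z * sqrt A)"
    using pos by (simp add: field_simps)
  ultimately show ?thesis
    using deriv by auto
qed

lemma level_quot_antimono:
  assumes "n > 0" "q \<le> 0 \<or> 3 * q^2 \<le> 2 * n" "0 < x" "x \<le> y"
  shows "level_quot n q y \<le> level_quot n q x"
  by (rule DERIV_nonpos_imp_nonincreasing[OF \<open>x \<le> y\<close>])
    (use level_quot_deriv_nonpos assms in auto)

lemma rate_eq_iff_level:
  assumes n: "n > 0" and m: "m > 0" and x: "x > 0"
  shows "m * ln (1 + x) - q * sqrt m * sqrt (dispersion x) = n \<longleftrightarrow> sqrt m * level n q x = 2 * n"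
proof -
  define u L s R where "u = sqrt m" and "L = ln (1 + x)" and "s = sqrt (dispersion x)"
    and "R = sqrt (q^2 * dispersion x + 4 * n * L)"
  have pos: "u > 0" "L > 0" "s > 0"
    using m x dispersion_pos[OF x] by (simp_all add: u_def L_def s_def)
  have "q^2 * dispersion x + 4 * n * L > 0"
    using n pos dispersion_pos[OF x] by (simp add: add_nonneg_pos)
  then have R: "R^2 = q^2 * s^2 + 4 * n * L" "R \<ge> 0"
    using dispersion_pos[OF x] by (simp_all add: R_def s_def)
  have level: "level n q x = R - q * s"
    by (simp add: level_def R_def s_def L_def)
  have lhs: "m * ln (1 + x) - q * sqrt m * sqrt (dispersion x) = L * u^2 - q * s * u"
    using m by (simp add: u_def L_def s_def mult_ac)
  \<comment> \<open>both sides say that u = sqrt m is the positive root of L u^2 - q s u - n\<close>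
  have "L * u^2 - q * s * u = n \<longleftrightarrow> 2 * L * u = R + q * s"
  proof
    assume h: "L * u^2 - q * s * u = n"
    then have "u * (L * u - q * s) > 0"
      using n by (simp add: power2_eq_square algebra_simps)
    then have "L * u - q * s > 0"
      using pos by (simp add: zero_less_mult_iff)
    moreover have "L * u > 0"
      using pos by simp
    ultimately have gt: "2 * L * u - q * s > 0"
      by linarith
    have "(2 * L * u - q * s)^2 = 4 * L * (L * u^2 - q * s * u) + q^2 * s^2"
      by (simp add: power2_eq_square algebra_simps)
    also have "\<dots> = R^2"
      unfolding h R(1) by simp
    finally have "(2 * L * u - q * s)^2 = R^2" .
    then show "2 * L * u = R + q * s"
      using gt R(2) by (simp add: power2_eq_iff_nonneg)
  next
    assume h: "2 * L * u = R + q * s"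
    have "4 * L * (L * u^2 - q * s * u) = (R + q * s)^2 - 2 * q * s * (R + q * s)"
      by (simp add: h[symmetric] power2_eq_square algebra_simps)
    also have "\<dots> = 4 * L * n"
      using R by (simp add: power2_eq_square algebra_simps)
    finally show "L * u^2 - q * s * u = n"
      using pos by simp
  qed
  also have "\<dots> \<longleftrightarrow> u * (R - q * s) = 2 * n"
  proof -
    have "u * (R - q * s) * (R + q * s) = u * (R^2 - q^2 * s^2)"
      by (simp add: power2_eq_square algebra_simps)
    also have "\<dots> = 2 * n * (2 * L * u)"
      unfolding R(1) by simp
    finally have eq: "u * (R - q * s) * (R + q * s) = 2 * n * (2 * L * u)" .
    show ?thesis
    proof
      assume "2 * L * u = R + q * s"
      with eq have "u * (R - q * s) * (2 * L * u) = 2 * n * (2 * L * u)"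
        by simp
      then show "u * (R - q * s) = 2 * n"
        using pos by simp
    next
      assume "u * (R - q * s) = 2 * n"
      with eq have "2 * n * (R + q * s) = 2 * n * (2 * L * u)"
        by simp
      then show "2 * L * u = R + q * s"
        using n by simp
    qed
  qed
  finally show ?thesis
    by (simp add: lhs level u_def)
qed

lemma Fk_eq_0_iff_level:
  assumes N: "N > 0" and m: "m > 0" and x: "x > 0"
  shows "Fk N eps m x = 0 \<longleftrightarrow> sqrt m * level (N * ln 2) (Qinv eps) x = 2 * (N * ln 2)"
proof -
  define q where "q = Qinv eps"
  have "sqrt m > 0" "sqrt m * sqrt m = m"
    using m by simp_all
  then have "Fk N eps m x
      = (N * ln 2 - (m * ln (1 + x) - q * sqrt m * sqrt (dispersion x))) / (m * ln 2)"
    using m by (simp add: Fk_def dispersion_def q_def log_def real_sqrt_divide field_simps)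
  then have "Fk N eps m x = 0 \<longleftrightarrow> m * ln (1 + x) - q * sqrt m * sqrt (dispersion x) = N * ln 2"
    using m by auto
  also have "\<dots> \<longleftrightarrow> sqrt m * level (N * ln 2) q x = 2 * (N * ln 2)"
    using N m x by (intro rate_eq_iff_level) auto
  finally show ?thesis
    by (simp add: q_def)
qed

lemma Fk_at_zero: "m > 0 \<Longrightarrow> N > 0 \<Longrightarrow> Fk N eps m 0 \<noteq> 0"
  unfolding Fk_def by simp

lemma Gammak_eqI:
  assumes N: "N > 0" and m: "m > 0" and x: "x > 0" and root: "Fk N eps m x = 0"
  shows "Gammak N eps m = x"
  unfolding Gammak_def
proof (rule the_equality)
  show "0 < x \<and> Fk N eps m x = 0"
    using x root by simp
next
  fix y assume y: "0 < y \<and> Fk N eps m y = 0"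
  then have "sqrt m * level (N * ln 2) (Qinv eps) y = sqrt m * level (N * ln 2) (Qinv eps) x"
    using Fk_eq_0_iff_level[OF N m x] Fk_eq_0_iff_level[OF N m] root by auto
  then have "level (N * ln 2) (Qinv eps) y = level (N * ln 2) (Qinv eps) x"
    using m by simp
  moreover have "N * ln 2 > 0"
    using N by simp
  ultimately show "y = x"
    using level_strict_mono[of "N * ln 2" y x "Qinv eps"] level_strict_mono[of "N * ln 2" x y "Qinv eps"] x y
    by (metis linorder_neqE_linordered_idom less_irrefl)
qed

lemma Qinv_bound_imp_sq_le:
  assumes N: "N > 0" and c: "Qinv eps / sqrt N \<le> 2 * sqrt (ln 2) / (4 - sqrt 2)"
  shows "Qinv eps \<le> 0 \<or> 3 * (Qinv eps)^2 \<le> 2 * (N * ln 2)"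
proof (cases "Qinv eps \<le> 0")
  case False
  then have q: "Qinv eps > 0" by simp
  have s2: "sqrt 2 < 3 / 2"
    by (rule real_less_lsqrt) (auto simp: power2_eq_square)
  have "Qinv eps \<le> 2 * sqrt (ln 2) / (4 - sqrt 2) * sqrt N"
    using c N by (simp add: divide_le_eq)
  then have "(Qinv eps)^2 \<le> (2 * sqrt (ln 2) / (4 - sqrt 2) * sqrt N)^2"
    using q by (intro power_mono) auto
  also have "\<dots> = 4 * ln 2 * N / (18 - 8 * sqrt 2)"
    using N by (simp add: power_mult_distrib power_divide power2_eq_square algebra_simps)
  also have "\<dots> \<le> 4 * ln 2 * N / 6"
    using N s2 by (intro divide_left_mono) auto
  finally show ?thesis
    by simp
qed simp

lemma energy_eq_level_quot:
  assumes "m > 0" "x > 0" "sqrt m * level n q x = 2 * n"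
  shows "m * x * (level_quot n q x)^2 = 4 * n^2"
proof -
  have "(sqrt m * level n q x)^2 = (2 * n)^2"
    using assms(3) by simp
  then show ?thesis
    using assms(1,2) by (simp add: level_eq_level_quot_mult power_mult_distrib mult_ac)
qed

lemma Gammak_le:
  assumes N: "N > 0" and m: "0 < m" "m \<le> D" and "g \<ge> 0" and root: "Fk N eps m g = 0"
  shows "0 < Gammak N eps D" "Gammak N eps D \<le> g" "Fk N eps D (Gammak N eps D) = 0"
proof -
  define n q where "n = N * ln 2" and "q = Qinv eps"
  have n: "n > 0" using N by (simp add: n_def)
  have g: "g > 0"
    using \<open>g \<ge> 0\<close> root Fk_at_zero[OF m(1) N] by (cases "g = 0") auto
  have "sqrt m * level n q g = 2 * n"
    using Fk_eq_0_iff_level[OF N m(1) g] root by (simp add: n_def q_def)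
  then have "level n q g = 2 * n / sqrt m"
    using m by (simp add: field_simps)
  moreover have "2 * n / sqrt D \<le> 2 * n / sqrt m"
    using n m by (intro divide_left_mono) auto
  ultimately have "2 * n / sqrt D \<le> level n q g"
    by simp
  moreover have "level n q 0 \<le> 2 * n / sqrt D"
    using n m by simp
  ultimately obtain x where x: "0 \<le> x" "x \<le> g" "level n q x = 2 * n / sqrt D"
    using IVT'[of "level n q" 0 "2 * n / sqrt D" g] continuous_on_level g by auto
  have "x > 0"
    using x n m by (cases "x = 0") auto
  moreover have "Fk N eps D x = 0"
    using Fk_eq_0_iff_level[OF N _ \<open>x > 0\<close>] x m by (simp add: n_def q_def)
  ultimately have "Gammak N eps D = x"
    using Gammak_eqI[OF N] m by auto
  with x \<open>x > 0\<close> \<open>Fk N eps D x = 0\<close>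
  show "0 < Gammak N eps D" "Gammak N eps D \<le> g" "Fk N eps D (Gammak N eps D) = 0"
    by simp_all
qed

lemma Gammak_energy_le:
  assumes N: "N > 0" and c: "Qinv eps / sqrt N \<le> 2 * sqrt (ln 2) / (4 - sqrt 2)"
    and m: "0 < m" "m \<le> D" and "g \<ge> 0" and root: "Fk N eps m g = 0"
  shows "D * Gammak N eps D \<le> m * g"
proof -
  define n q x where "n = N * ln 2" and "q = Qinv eps" and "x = Gammak N eps D"
  have n: "n > 0" using N by (simp add: n_def)
  have x: "0 < x" "x \<le> g" "Fk N eps D x = 0"
    using Gammak_le[OF N m \<open>g \<ge> 0\<close> root] by (simp_all add: x_def)
  have g: "g > 0" using x by simp
  \<comment> \<open>on the root curve the energy is m g = 4 n^2 / level_quot(g)^2, and level_quot is nonincreasing\<close>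
  have energy_x: "D * x * (level_quot n q x)^2 = 4 * n^2"
    using energy_eq_level_quot[of D x] Fk_eq_0_iff_level[OF N _ x(1)] m x by (simp add: n_def q_def)
  have energy_g: "m * g * (level_quot n q g)^2 = 4 * n^2"
    using energy_eq_level_quot[of m g] Fk_eq_0_iff_level[OF N m(1) g] root m g by (simp add: n_def q_def)
  have "0 < level_quot n q g"
    using level_pos[OF n g, of q] level_eq_level_quot_mult[OF g, of n q] g
    by (simp add: zero_less_mult_iff)
  moreover have "level_quot n q g \<le> level_quot n q x"
    using level_quot_antimono[OF n _ x(1,2)] Qinv_bound_imp_sq_le[OF N c] by (simp add: n_def q_def)
  ultimately have "D * x * (level_quot n q g)^2 \<le> D * x * (level_quot n q x)^2"
    using m x by (intro mult_left_mono power_mono) auto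
  also have "\<dots> = m * g * (level_quot n q g)^2"
    using energy_x energy_g by simp
  finally have "D * x * (level_quot n q g)^2 \<le> m * g * (level_quot n q g)^2" .
  then show ?thesis
    using \<open>0 < level_quot n q g\<close> by (simp add: x_def)
qed

lemma sic_sinr_iff_powers:
  fixes c1 c2 p1 p2 g1 g2 :: real
  assumes "c1 > 0" "c2 > 0" "p2 \<ge> 0"
  shows "g1 = p1 * c1 / (p2 * c1 + 1) \<and> g2 = p2 * c2
     \<longleftrightarrow> p1 = g1 * g2 / c2 + g1 / c1 \<and> p2 = g2 / c2"
proof -
  have "p2 * c1 + 1 > 0"
    using assms by (simp add: add_nonneg_pos)
  then have "g1 = p1 * c1 / (p2 * c1 + 1) \<longleftrightarrow> p1 = g1 * p2 + g1 / c1"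
    using assms(1) by (auto simp: field_simps)
  moreover have "g2 = p2 * c2 \<longleftrightarrow> p2 = g2 / c2"
    using assms(2) by (auto simp: field_simps)
  moreover have "p2 = g2 / c2 \<Longrightarrow> g1 * p2 = g1 * g2 / c2"
    by simp
  ultimately show ?thesis
    by metis
qed

lemma sic_cost_mono:
  fixes c1 c2 :: real
  assumes "c1 > 0" "c2 > 0" "0 \<le> g2" "g2 \<le> g2'"
    and "0 \<le> D1 * g1" "D1 * g1 \<le> m1 * g1'" "D2 * g2 \<le> m2 * g2'"
  shows "D1 * (g1 * g2 / c2 + g1 / c1) + D2 * (g2 / c2)
      \<le> m1 * (g1' * g2' / c2 + g1' / c1) + m2 * (g2' / c2)"
proof -
  have "D1 * g1 * (g2 / c2 + 1 / c1) \<le> m1 * g1' * (g2' / c2 + 1 / c1)"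
    by (rule mult_mono) (use assms in \<open>auto intro: divide_right_mono order.trans\<close>)
  moreover have "D2 * g2 / c2 \<le> m2 * g2' / c2"
    using assms by (simp add: divide_right_mono)
  ultimately show ?thesis
    by (simp add: algebra_simps)
qed

lemma feasible_deadline_point:
  fixes h1 h2 :: complex
  assumes "h1 \<noteq> 0" "h2 \<noteq> 0" "mhat > 0" "N1 > 0" "N2 > 0"
    and "Qinv eps1 / sqrt N1 \<le> 2 * sqrt (ln 2) / (4 - sqrt 2)"
    and "Qinv eps2 / sqrt N2 \<le> 2 * sqrt (ln 2) / (4 - sqrt 2)"
    and F: "feasible h1 h2 D1 D2 mhat Pmax N1 N2 eps1 eps2 m1' p1' g1' m2' p2' g2'"
  defines "g1 \<equiv> Gammak N1 eps1 D1" and "g2 \<equiv> Gammak N2 eps2 D2"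
  shows "feasible h1 h2 D1 D2 mhat Pmax N1 N2 eps1 eps2
           D1 (g1 * g2 / (cmod h2)^2 + g1 / (cmod h1)^2) g1 D2 (g2 / (cmod h2)^2) g2"
    and "D1 * (g1 * g2 / (cmod h2)^2 + g1 / (cmod h1)^2) + D2 * (g2 / (cmod h2)^2)
           \<le> m1' * p1' + m2' * p2'"
proof -
  define c1 c2 where "c1 = (cmod h1)^2" and "c2 = (cmod h2)^2"
  have c: "c1 > 0" "c2 > 0"
    using assms(1,2) by (simp_all add: c1_def c2_def)
  define p1 p2 where "p1 = g1 * g2 / c2 + g1 / c1" and "p2 = g2 / c2"
  note F' = F[unfolded feasible_def, folded c1_def c2_def]
  have p': "p1' = g1' * g2' / c2 + g1' / c1" "p2' = g2' / c2" and g': "g1' \<ge> 0" "g2' \<ge> 0"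
    using sic_sinr_iff_powers[OF c, of p2' g1' p1' g2'] F' c by auto
  have m': "0 < m1'" "0 < m2'"
    using F' assms(3) by linarith+
  have root': "Fk N1 eps1 m1' g1' = 0" "Fk N2 eps2 m2' g2' = 0" and D: "m1' \<le> D1" "m2' \<le> D2"
    using F' by blast+
  have G1: "0 < g1" "g1 \<le> g1'" "Fk N1 eps1 D1 g1 = 0" "D1 * g1 \<le> m1' * g1'"
    using Gammak_le[OF assms(4) m'(1) D(1) g'(1) root'(1)]
      Gammak_energy_le[OF assms(4,6) m'(1) D(1) g'(1) root'(1)]
    by (simp_all add: g1_def)
  have G2: "0 < g2" "g2 \<le> g2'" "Fk N2 eps2 D2 g2 = 0" "D2 * g2 \<le> m2' * g2'"
    using Gammak_le[OF assms(5) m'(2) D(2) g'(2) root'(2)]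
      Gammak_energy_le[OF assms(5,7) m'(2) D(2) g'(2) root'(2)]
    by (simp_all add: g2_def)
  have "p1 + p2 \<le> p1' + p2'"
    unfolding p1_def p2_def p' using sic_cost_mono[OF c, of g2 g2' 1 g1 1 g1' 1 1] G1 G2 by simp
  then have "p1 + p2 \<le> Pmax"
    using F' by linarith
  moreover have "0 \<le> p1" "0 \<le> p2"
    using G1 G2 c by (simp_all add: p1_def p2_def)
  moreover have "g1 = p1 * c1 / (p2 * c1 + 1)" "g2 = p2 * c2"
    using sic_sinr_iff_powers[OF c \<open>0 \<le> p2\<close>, of g1 p1 g2] by (simp_all add: p1_def p2_def)
  moreover have "mhat \<le> D1" "mhat \<le> D2"
    using F' D by linarith+
  ultimately have "feasible h1 h2 D1 D2 mhat Pmax N1 N2 eps1 eps2 D1 p1 g1 D2 p2 g2"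
    using G1(3) G2(3) unfolding feasible_def c1_def[symmetric] c2_def[symmetric] by blast
  then show "feasible h1 h2 D1 D2 mhat Pmax N1 N2 eps1 eps2
      D1 (g1 * g2 / (cmod h2)^2 + g1 / (cmod h1)^2) g1 D2 (g2 / (cmod h2)^2) g2"
    by (simp add: p1_def p2_def c1_def c2_def)
  have "D1 * p1 + D2 * p2 \<le> m1' * p1' + m2' * p2'"
    unfolding p1_def p2_def p' using G1 G2 m' D by (intro sic_cost_mono[OF c]) auto
  then show "D1 * (g1 * g2 / (cmod h2)^2 + g1 / (cmod h1)^2) + D2 * (g2 / (cmod h2)^2)
      \<le> m1' * p1' + m2' * p2'"
    by (simp add: p1_def p2_def c1_def c2_def)
qed

theorem theorem1:
  fixes h1 h2 :: complex
    and D1 D2 mhat Pmax N1 N2 eps1 eps2 :: real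
  assumes "h1 \<noteq> 0" "h2 \<noteq> 0" "cmod h1 \<le> cmod h2"
    and "D1 < D2" "mhat > 0" "Pmax > 0" "N1 > 0" "N2 > 0"
    and "0 < eps1" "eps1 < 1" "0 < eps2" "eps2 < 1"
    and "Qinv eps1 / sqrt N1 \<le> 2 * sqrt (ln 2) / (4 - sqrt 2)"
    and "Qinv eps2 / sqrt N2 \<le> 2 * sqrt (ln 2) / (4 - sqrt 2)"
    and "\<exists>m1 p1 g1 m2 p2 g2. feasible h1 h2 D1 D2 mhat Pmax N1 N2 eps1 eps2 m1 p1 g1 m2 p2 g2"
  shows "let g1 = Gammak N1 eps1 D1; g2 = Gammak N2 eps2 D2;
             p1 = g1 * g2 / (cmod h2)^2 + g1 / (cmod h1)^2;
             p2 = g2 / (cmod h2)^2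
         in feasible h1 h2 D1 D2 mhat Pmax N1 N2 eps1 eps2 D1 p1 g1 D2 p2 g2 \<and>
            (\<forall>m1' p1' g1' m2' p2' g2'.
               feasible h1 h2 D1 D2 mhat Pmax N1 N2 eps1 eps2 m1' p1' g1' m2' p2' g2' \<longrightarrow>
               D1 * p1 + D2 * p2 \<le> m1' * p1' + m2' * p2')"
proof -
  note deadline_point = feasible_deadline_point[OF assms(1,2,5,7,8,13,14)]
  obtain m1 p1 g1 m2 p2 g2 where "feasible h1 h2 D1 D2 mhat Pmax N1 N2 eps1 eps2 m1 p1 g1 m2 p2 g2"
    using assms(15) by blast
  then show ?thesis
    unfolding Let_def using deadline_point by blast
qed

end
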